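(* Let $(V,\mathcal{G})$ be an instance of $k$-\textsc{Compatible Ordering} with $\mathcal{G}=\{(A_1,B_1),\dots,(A_k,B_k)\}$. If there exists $i\in[k]$ such that the union of $A_i$ and $B_i$ is a directed acyclic graph, then $(V,\mathcal{G})$ is a yes-instance.
   Context: For a positive integer $k$, write $[k]=\{1,\dots,k\}$. An instance of $k$-\textsc{Compatible Ordering} consists of a finite vertex set $V$ with $n=|V|$ and a collection $\mathcal{G}$ of $k$ pairs of directed graphs $(A_1,B_1),\dots,(A_k,B_k)$ with $V(A_i)=V(B_i)=V$ for all $i\in[k]$. The instance is a yes-instance if and only if there exist an ordering $s_1,\dots,s_n$ of $V$ and labels $\ell_1,\dots,\ell_n\in[k]$ such that for every $i\in[n]$: (i) $s_i$ has no out-neighbor in $A_{\ell_i}$ among $s_{i+1},\dots,s_n$, and (ii) $s_i$ has no in-neighbor in $B_{\ell_i}$ among $s_1,\dots,s_{i-1}$. The union of $A_i$ and $B_i$ is the directed graph on $V$ whose arc set is the union of their arc sets. *)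

theory Defs
  imports Main
begin

definition digraph_on :: "'a set \<Rightarrow> ('a \<times> 'a) set \<Rightarrow> bool" where
  "digraph_on V E \<longleftrightarrow> E \<subseteq> V \<times> V"

definition compat_instance ::
  "'a set \<Rightarrow> nat \<Rightarrow> (nat \<Rightarrow> ('a \<times> 'a) set) \<Rightarrow> (nat \<Rightarrow> ('a \<times> 'a) set) \<Rightarrow> bool" where
  "compat_instance V k A B \<longleftrightarrow> finite V \<and> k \<ge> 1 \<and>
     (\<forall>i\<in>{1..k}. digraph_on V (A i) \<and> digraph_on V (B i))"

text \<open>Yes-instance: an ordering s_1..s_n of V (a distinct list with set V, 0-indexed) and
  labels l_1..l_n in [k] such that (i) s_i has no out-neighbour in A_{l_i} among later vertices,
  (ii) s_i has no in-neighbour in B_{l_i} among earlier vertices.\<close>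

definition compat_yes ::
  "'a set \<Rightarrow> nat \<Rightarrow> (nat \<Rightarrow> ('a \<times> 'a) set) \<Rightarrow> (nat \<Rightarrow> ('a \<times> 'a) set) \<Rightarrow> bool" where
  "compat_yes V k A B \<longleftrightarrow>
     (\<exists>s :: 'a list. \<exists>l :: nat \<Rightarrow> nat.
        distinct s \<and> set s = V \<and>
        (\<forall>i < length s. l i \<in> {1..k}) \<and>
        (\<forall>i < length s. \<forall>j < length s. i < j \<longrightarrow> (s ! i, s ! j) \<notin> A (l i)) \<and>
        (\<forall>i < length s. \<forall>j < length s. j < i \<longrightarrow> (s ! j, s ! i) \<notin> B (l i)))"

end

theory Submission
  imports Defs
begin

text \<open>If some pair (A c, B c) has an acyclic union, give every vertex the label c and list V
  in a topological order of the converse of A c \<union> B c: then no arc of A c or B c points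
  from an earlier to a later vertex, which is exactly what both conditions ask for.\<close>

lemma wf_topological_list:
  assumes "finite V" "wf E"
  shows "\<exists>s. distinct s \<and> set s = V \<and> sorted_wrt (\<lambda>x y. (x, y) \<notin> E) s"
  using assms(1)
proof (induction V rule: finite_psubset_induct)
  case (psubset V)
  show ?case
  proof (cases "V = {}")
    case True
    then show ?thesis by simp
  next
    case False
    then obtain z where "z \<in> V" and z_minimal: "\<forall>y. (y, z) \<in> E \<longrightarrow> y \<notin> V"
      using assms(2) unfolding wf_eq_minimal by blast
    then have "V - {z} \<subset> V" by auto
    then obtain s where "distinct s" "set s = V - {z}" "sorted_wrt (\<lambda>x y. (x, y) \<notin> E) s"
      using psubset.IH by blast
    with \<open>z \<in> V\<close> z_minimal show ?thesis
      by (intro exI[of _ "s @ [z]"]) (auto simp: sorted_wrt_append)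
  qed
qed

theorem corollary1:
  fixes V :: "'a set" and k :: nat and A B :: "nat \<Rightarrow> ('a \<times> 'a) set"
  assumes "compat_instance V k A B"
    and "\<exists>i\<in>{1..k}. acyclic (A i \<union> B i)"
  shows "compat_yes V k A B"
proof -
  obtain c where c: "c \<in> {1..k}" "acyclic (A c \<union> B c)" using assms(2) by blast
  have "finite V" and arcs: "A c \<union> B c \<subseteq> V \<times> V"
    using assms(1) c(1) unfolding compat_instance_def digraph_on_def by auto
  then have "finite (A c \<union> B c)" by (meson finite_SigmaI finite_subset)
  then have "wf (A c \<union> B c)" using c(2) by (rule finite_acyclic_wf)
  then obtain s where s: "distinct s" "set s = V"
    "sorted_wrt (\<lambda>x y. (x, y) \<notin> A c \<union> B c) s"
    using wf_topological_list[OF \<open>finite V\<close>] by blast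
  show ?thesis
    unfolding compat_yes_def
    using s c(1) by (intro exI[of _ s] exI[of _ "\<lambda>_. c"]) (auto simp: sorted_wrt_iff_nth_less)
qed

end
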